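(* Let $p\in L^\infty(Q_T)$, and let $u\in\mathbb Z^1$ with $u\ge0$ in $Q_T$ satisfy $\partial_tu\ge\int_\Omega J(x,y)u(y,t)\,dy+p(x,t)u$ for $(x,t)\in Q_T$. If $u(x_0,t_0)=0$ for some $(x_0,t_0)\in Q_T$, then $u(x_0,t)=0$ for all $t\in[0,t_0]$.
   Context: $\Omega\subset\mathbb R^N$ bounded with smooth boundary, $T>0$, $Q_T=\bar\Omega\times(0,T]$. $J:\mathbb R^{2N}\to[0,\infty)$ is continuous with $J(x,x)>0$ and $\int_{\mathbb R^N}J(x,y)dy=1$. $\mathbb Z^1$ is the set of $u\in L^\infty(Q_T)$ with $u(x,\cdot)\in C^1([0,T])$ for every $x\in\bar\Omega$. *)

theory Defs
  imports "HOL-Analysis.Analysis"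
begin

coinductive smooth_fun :: "('a::euclidean_space \<Rightarrow> real) \<Rightarrow> bool" where
  "(\<forall>x. g differentiable (at x)) \<Longrightarrow>
   (\<forall>b\<in>Basis. smooth_fun (\<lambda>x. frechet_derivative g (at x) b)) \<Longrightarrow> smooth_fun g"

definition smooth_bounded_domain :: "'a::euclidean_space set \<Rightarrow> bool" where
  "smooth_bounded_domain \<Omega> \<longleftrightarrow> open \<Omega> \<and> bounded \<Omega> \<and>
     (\<exists>\<phi>. smooth_fun \<phi> \<and> \<Omega> = {x. \<phi> x < 0} \<and>
          (\<forall>x. \<phi> x = 0 \<longrightarrow> (\<exists>b\<in>Basis. frechet_derivative \<phi> (at x) b \<noteq> 0)))"

definition QT :: "'a::euclidean_space set \<Rightarrow> real \<Rightarrow> ('a \<times> real) set" where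
  "QT \<Omega> T = closure \<Omega> \<times> {0<..T}"

text \<open>L-infinity on Q_T: measurable and bounded (the pointwise inequalities in the
  statement refer to the given representative).\<close>
definition Linf :: "'a::euclidean_space set \<Rightarrow> real \<Rightarrow> ('a \<Rightarrow> real \<Rightarrow> real) \<Rightarrow> bool" where
  "Linf \<Omega> T u \<longleftrightarrow> set_borel_measurable lborel (QT \<Omega> T) (\<lambda>(x,t). u x t) \<and>
     (\<exists>M. \<forall>(x,t)\<in>QT \<Omega> T. \<bar>u x t\<bar> \<le> M)"

definition C1_interval :: "real \<Rightarrow> (real \<Rightarrow> real) \<Rightarrow> bool" where
  "C1_interval T f \<longleftrightarrow> (\<exists>f'. continuous_on {0..T} f' \<and>
     (\<forall>t\<in>{0..T}. (f has_real_derivative f' t) (at t within {0..T})))"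

definition Z1 :: "'a::euclidean_space set \<Rightarrow> real \<Rightarrow> ('a \<Rightarrow> real \<Rightarrow> real) set" where
  "Z1 \<Omega> T = {u. Linf \<Omega> T u \<and> (\<forall>x\<in>closure \<Omega>. C1_interval T (u x))}"

end

theory Submission
  imports Defs
begin

text \<open>Only the nonnegativity of the nonlocal term and the boundedness \<open>\<bar>p\<bar> \<le> M\<close> enter:
  along the line \<open>x = x\<^sub>0\<close> the nonnegative function \<open>f = u x\<^sub>0\<close> satisfies
  \<open>f' \<ge> -M f\<close>, so \<open>exp (M t) * f t\<close> is nondecreasing. Since it vanishes at \<open>t\<^sub>0\<close>, it
  vanishes on \<open>[0, t\<^sub>0]\<close>.\<close>

lemma set_integral_nonneg:
  fixes f :: "'a \<Rightarrow> real"
  assumes "\<And>x. x \<in> A \<Longrightarrow> 0 \<le> f x"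
  shows "0 \<le> (LINT x:A|M. f x)"
  unfolding set_lebesgue_integral_def
  by (rule integral_nonneg_AE, rule AE_I2) (simp add: assms indicator_def)

lemma exp_mult_increasing_if_deriv_ge:
  fixes f f' :: "real \<Rightarrow> real"
  assumes "a \<le> b" and cont: "continuous_on {a..b} f"
    and deriv: "\<And>t. a < t \<Longrightarrow> t < b \<Longrightarrow> (f has_real_derivative f' t) (at t)"
    and ge: "\<And>t. a < t \<Longrightarrow> t < b \<Longrightarrow> f' t + M * f t \<ge> 0"
  shows "exp (M * a) * f a \<le> exp (M * b) * f b"
proof (rule DERIV_nonneg_imp_increasing_open[OF \<open>a \<le> b\<close>])
  fix t assume t: "a < t" "t < b"
  have "((\<lambda>s. exp (M * s) * f s) has_real_derivative exp (M * t) * (f' t + M * f t)) (at t)"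
    by (auto intro!: derivative_eq_intros deriv t simp: algebra_simps)
  then show "\<exists>y. ((\<lambda>s. exp (M * s) * f s) has_real_derivative y) (at t) \<and> 0 \<le> y"
    using ge[OF t] by auto
qed (intro continuous_intros cont)

lemma nonneg_supersolution_vanishes_before_zero:
  fixes f f' :: "real \<Rightarrow> real"
  assumes cont: "continuous_on {a..b} f"
    and deriv: "\<And>t. a < t \<Longrightarrow> t < b \<Longrightarrow> (f has_real_derivative f' t) (at t)"
    and ge: "\<And>t. a < t \<Longrightarrow> t < b \<Longrightarrow> f' t + M * f t \<ge> 0"
    and nonneg: "\<And>t. t \<in> {a..b} \<Longrightarrow> f t \<ge> 0"
    and c: "c \<in> {a..b}" "f c = 0"
    and t: "t \<in> {a..c}"
  shows "f t = 0"
proof -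
  have "exp (M * t) * f t \<le> exp (M * c) * f c"
    using t c by (intro exp_mult_increasing_if_deriv_ge[where f' = f'] deriv ge
        continuous_on_subset[OF cont]) auto
  then have "f t \<le> 0"
    using \<open>f c = 0\<close> by (simp add: mult_le_0_iff)
  then show ?thesis
    using nonneg[of t] t c by simp
qed

theorem corollary4p1:
  fixes \<Omega> :: "'a::euclidean_space set" and T :: real
    and J :: "'a \<Rightarrow> 'a \<Rightarrow> real" and p u :: "'a \<Rightarrow> real \<Rightarrow> real"
    and x0 :: 'a and t0 :: real
  assumes dom: "smooth_bounded_domain \<Omega>"
    and T: "T > 0"
    and J_cont: "continuous_on UNIV (\<lambda>(x,y). J x y)"
    and J_nonneg: "\<And>x y. J x y \<ge> 0"
    and J_diag: "\<And>x. J x x > 0"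
    and J_int: "\<And>x. integrable lborel (J x) \<and> integral\<^sup>L lborel (J x) = 1"
    and p: "Linf \<Omega> T p"
    and u: "u \<in> Z1 \<Omega> T"
    and u_nonneg: "\<And>x t. (x,t) \<in> QT \<Omega> T \<Longrightarrow> u x t \<ge> 0"
    and ineq: "\<And>x t D. (x,t) \<in> QT \<Omega> T \<Longrightarrow>
                 (u x has_real_derivative D) (at t within {0..T}) \<Longrightarrow>
                 D \<ge> (LINT y:\<Omega>|lborel. J x y * u y t) + p x t * u x t"
    and pt: "(x0,t0) \<in> QT \<Omega> T"
    and zero: "u x0 t0 = 0"
  shows "\<forall>t\<in>{0..t0}. u x0 t = 0"
proof -
  have x0: "x0 \<in> closure \<Omega>" and t0: "t0 \<in> {0..T}"
    using pt by (auto simp: QT_def)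
  have line: "(x0, t) \<in> QT \<Omega> T" if "t \<in> {0<..T}" for t
    using that x0 by (simp add: QT_def)
  obtain M where M: "\<forall>(x,t)\<in>QT \<Omega> T. \<bar>p x t\<bar> \<le> M"
    using p by (auto simp: Linf_def)
  obtain f' where df: "\<And>t. t \<in> {0..T} \<Longrightarrow> (u x0 has_real_derivative f' t) (at t within {0..T})"
    using u x0 unfolding Z1_def C1_interval_def by blast
  have cont: "continuous_on {0..T} (u x0)"
    using df by (metis DERIV_continuous continuous_on_eq_continuous_within)
  have deriv: "(u x0 has_real_derivative f' t) (at t)" if "0 < t" "t < T" for t
    using df[of t] that by (simp add: at_within_Icc_at)
  have nonneg: "u x0 t \<ge> 0" if "t \<in> {0..T}" for t
    using continuous_ge_on_closure[of "{0<..T}" "u x0" t 0] cont that T u_nonneg line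
    by simp
  have ge: "f' t + M * u x0 t \<ge> 0" if "0 < t" "t < T" for t
  proof -
    have "0 \<le> (LINT y:\<Omega>|lborel. J x0 y * u y t)"
      using J_nonneg u_nonneg that closure_subset[of \<Omega>]
      by (intro set_integral_nonneg mult_nonneg_nonneg) (auto simp: QT_def)
    moreover have "(LINT y:\<Omega>|lborel. J x0 y * u y t) + p x0 t * u x0 t \<le> f' t"
      using ineq[OF line df] that by simp
    moreover have "- M * u x0 t \<le> p x0 t * u x0 t"
      using M line[of t] nonneg[of t] that by (intro mult_right_mono) auto
    ultimately show ?thesis by linarith
  qed
  show ?thesis
    using nonneg_supersolution_vanishes_before_zero[OF cont deriv ge nonneg t0 zero] by blast
qed

end
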